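(* Let $\mathcal{U}$ be a UFO tree of a tree $F$ (arbitrary degree). For any level $l>0$ of $\mathcal{U}$, the number of level-$l$ clusters is at most $5/6$ times the number of level-$(l-1)$ clusters.
   Context: UFO trees. For a tree $F$ with vertex set $V$: level-$0$ clusters are singletons; level-$i$ clusters partition $V$ into connected pieces; two are adjacent if an edge of $F$ joins them; the degree of a cluster is the number of edges of $F$ with exactly one endpoint in it, and it is high degree if this is at least $3$. Level $i+1$ arises by merging pairwise disjoint groups of level-$i$ clusters, each group being two adjacent clusters of degrees $\{1,1\}$, $\{1,2\}$ or $\{2,2\}$, or a high-degree cluster together with one or more adjacent degree-$1$ clusters, chosen maximally (each high-degree cluster is grouped with all its adjacent degree-$1$ clusters, and the remaining degree-$\le 2$ clusters are paired by a maximal matching of allowed pairs); ungrouped clusters persist. Levels are formed until $F$ is a single cluster (so level $l$ exists only if level $l-1$ has at least two clusters). *)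

theory Defs
  imports Complex_Main
begin

definition edge_set :: "'a set \<Rightarrow> 'a set set \<Rightarrow> bool" where
  "edge_set V E \<longleftrightarrow> (\<forall>e\<in>E. card e = 2 \<and> e \<subseteq> V)"

definition reach :: "'a set set \<Rightarrow> 'a set \<Rightarrow> 'a \<Rightarrow> 'a \<Rightarrow> bool" where
  "reach E S u v \<longleftrightarrow> (u, v) \<in> {(x, y). {x, y} \<in> E \<and> x \<in> S \<and> y \<in> S}\<^sup>*"

definition connected_in :: "'a set set \<Rightarrow> 'a set \<Rightarrow> bool" where
  "connected_in E S \<longleftrightarrow> S \<noteq> {} \<and> (\<forall>u\<in>S. \<forall>v\<in>S. reach E S u v)"

text \<open>tree: finite, connected, acyclic (every edge is a bridge)\<close>
definition is_tree :: "'a set \<Rightarrow> 'a set set \<Rightarrow> bool" where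
  "is_tree V E \<longleftrightarrow> finite V \<and> edge_set V E \<and> connected_in E V \<and>
     (\<forall>e\<in>E. \<forall>u v. e = {u, v} \<longrightarrow> \<not> reach (E - {e}) V u v)"

definition cdeg :: "'a set set \<Rightarrow> 'a set \<Rightarrow> nat" where
  "cdeg E C = card {e\<in>E. card (e \<inter> C) = 1}"

definition adj :: "'a set set \<Rightarrow> 'a set \<Rightarrow> 'a set \<Rightarrow> bool" where
  "adj E C D \<longleftrightarrow> C \<noteq> D \<and> (\<exists>e\<in>E. e \<inter> C \<noteq> {} \<and> e \<inter> D \<noteq> {})"

definition cluster_partition :: "'a set \<Rightarrow> 'a set set \<Rightarrow> 'a set set \<Rightarrow> bool" where
  "cluster_partition V E P \<longleftrightarrow> \<Union>P = V \<and> (\<forall>C\<in>P. connected_in E C) \<and>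
     (\<forall>C\<in>P. \<forall>D\<in>P. C \<noteq> D \<longrightarrow> C \<inter> D = {})"

definition valid_group :: "'a set set \<Rightarrow> 'a set set \<Rightarrow> 'a set set \<Rightarrow> bool" where
  "valid_group E P g \<longleftrightarrow> g \<subseteq> P \<and>
     ((\<exists>C. g = {C}) \<or>
      (\<exists>C D. g = {C, D} \<and> adj E C D \<and> cdeg E C \<in> {1, 2} \<and> cdeg E D \<in> {1, 2}) \<or>
      (\<exists>H L. g = insert H L \<and> H \<notin> L \<and> cdeg E H \<ge> 3 \<and> L \<noteq> {} \<and>
             (\<forall>C\<in>L. cdeg E C = 1 \<and> adj E H C)))"

text \<open>Q is obtained from P by one UFO merging round (with the maximality rules)\<close>
definition ufo_step :: "'a set set \<Rightarrow> 'a set set \<Rightarrow> 'a set set \<Rightarrow> bool" where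
  "ufo_step E P Q \<longleftrightarrow> (\<exists>G.
     \<Union>G = P \<and> (\<forall>g\<in>G. g \<noteq> {}) \<and> (\<forall>g1\<in>G. \<forall>g2\<in>G. g1 \<noteq> g2 \<longrightarrow> g1 \<inter> g2 = {}) \<and>
     (\<forall>g\<in>G. valid_group E P g) \<and>
     (\<forall>H\<in>P. cdeg E H \<ge> 3 \<longrightarrow>
        (\<forall>C\<in>P. adj E H C \<and> cdeg E C = 1 \<longrightarrow> (\<exists>g\<in>G. H \<in> g \<and> C \<in> g))) \<and>
     (\<forall>C\<in>P. \<forall>D\<in>P. {C} \<in> G \<and> {D} \<in> G \<and> adj E C D \<and>
        cdeg E C \<in> {1, 2} \<and> cdeg E D \<in> {1, 2} \<longrightarrow> False) \<and>
     Q = (\<lambda>g. \<Union>g) ` G)"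

definition ufo_tree :: "'a set \<Rightarrow> 'a set set \<Rightarrow> 'a set set list \<Rightarrow> bool" where
  "ufo_tree V E Ls \<longleftrightarrow> is_tree V E \<and> Ls \<noteq> [] \<and>
     Ls ! 0 = (\<lambda>v. {v}) ` V \<and>
     (\<forall>i<length Ls. cluster_partition V E (Ls ! i)) \<and>
     (\<forall>i. Suc i < length Ls \<longrightarrow> card (Ls ! i) \<ge> 2 \<and> ufo_step E (Ls ! i) (Ls ! Suc i)) \<and>
     card (last Ls) = 1"

end

(*
  A merging round splits the clusters into groups: unmerged singletons, adjacent
  pairs of degree at most 2, and stars (a high-degree cluster with adjacent
  leaves).  Pairs and stars at least halve their clusters, so the point is to bound
  the unmerged clusters.  By maximality of the round an unmerged cluster has high
  degree, is adjacent to a pair, or has degree 2 with both neighbours of high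
  degree ("sandwiched").  Contracting the clusters of a tree gives a tree, so there
  are fewer sandwiched than high-degree clusters and at least two more leaves than
  high-degree clusters.  Every leaf lies in a star or in or next to a pair; a pair
  has at most two unmerged neighbours and, as soon as some cluster has high degree,
  at most one leaf among itself and these neighbours.  Adding up these counts gives
  6 (number of groups) <= 5 (number of clusters).
*)

theory Submission
  imports Defs
begin

section \<open>Reachability and adjacency\<close>

lemma reach_refl: "reach F W x x"
  unfolding reach_def by simp

lemma reach_trans: "reach F W x y \<Longrightarrow> reach F W y z \<Longrightarrow> reach F W x z"
  unfolding reach_def by (meson rtrancl_trans)

lemma reach_edge: "{x, y} \<in> F \<Longrightarrow> x \<in> W \<Longrightarrow> y \<in> W \<Longrightarrow> reach F W x y"
  unfolding reach_def by auto

lemma reach_mono: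
  assumes "reach F W x y"
    and "\<And>u v. {u, v} \<in> F \<Longrightarrow> u \<in> W \<Longrightarrow> v \<in> W \<Longrightarrow> {u, v} \<in> F' \<and> u \<in> W' \<and> v \<in> W'"
  shows "reach F' W' x y"
proof -
  have "{(u, v). {u, v} \<in> F \<and> u \<in> W \<and> v \<in> W} \<subseteq> {(u, v). {u, v} \<in> F' \<and> u \<in> W' \<and> v \<in> W'}"
    using assms(2) by auto
  then show ?thesis
    using assms(1) rtrancl_mono unfolding reach_def by blast
qed

lemma subset_doubleton_if_card_le_2:
  assumes "finite A" "card A \<le> 2" "a \<in> A" "b \<in> A" "a \<noteq> b"
  shows "A \<subseteq> {a, b}"
proof
  fix x
  assume "x \<in> A"
  show "x \<in> {a, b}"
  proof (rule ccontr)
    assume "x \<notin> {a, b}"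
    then have "card {a, b, x} = 3"
      using assms(5) by (auto simp: card_insert_if)
    moreover have "card {a, b, x} \<le> card A"
      using assms(1,3,4) \<open>x \<in> A\<close> by (intro card_mono) auto
    ultimately show False
      using assms(2) by simp
  qed
qed

lemma adjI: "e \<in> E \<Longrightarrow> x \<in> e \<Longrightarrow> x \<in> C \<Longrightarrow> y \<in> e \<Longrightarrow> y \<in> D \<Longrightarrow> C \<noteq> D \<Longrightarrow> adj E C D"
  unfolding adj_def by blast

lemma adj_commute: "adj E C D \<longleftrightarrow> adj E D C"
  unfolding adj_def by blast

section \<open>Clusters of a partitioned tree\<close>

locale tree_partition =
  fixes V :: "'a set" and E :: "'a set set" and P :: "'a set set"
  assumes tree: "is_tree V E"
    and partition: "cluster_partition V E P"
begin

lemma finite_V: "finite V"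
  using tree unfolding is_tree_def by simp

lemma card_edge: "e \<in> E \<Longrightarrow> card e = 2"
  and edge_subset_V: "e \<in> E \<Longrightarrow> e \<subseteq> V"
  using tree unfolding is_tree_def edge_set_def by auto

lemma edgeE:
  assumes "e \<in> E"
  obtains a b where "a \<noteq> b" "e = {a, b}" "a \<in> V" "b \<in> V"
  using card_edge[OF assms] edge_subset_V[OF assms] by (auto simp: card_2_iff)

lemma finite_E: "finite E"
  using finite_subset[of E "Pow V"] edge_subset_V finite_V by auto

lemma edge_is_bridge: "{u, v} \<in> E \<Longrightarrow> \<not> reach (E - {{u, v}}) V u v"
  using tree unfolding is_tree_def by blast

lemma reach_V: "u \<in> V \<Longrightarrow> v \<in> V \<Longrightarrow> reach E V u v"
  using tree unfolding is_tree_def connected_in_def by blast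

lemma Union_P: "\<Union>P = V"
  using partition unfolding cluster_partition_def by simp

lemma finite_P: "finite P"
  using finite_subset[of P "Pow V"] Union_P finite_V by auto

lemma cluster_subset_V: "C \<in> P \<Longrightarrow> C \<subseteq> V"
  using Union_P by blast

lemma connected_cluster: "C \<in> P \<Longrightarrow> connected_in E C"
  using partition unfolding cluster_partition_def by simp

lemma cluster_nonempty: "C \<in> P \<Longrightarrow> C \<noteq> {}"
  using connected_cluster unfolding connected_in_def by simp

lemma cluster_eqI: "C \<in> P \<Longrightarrow> D \<in> P \<Longrightarrow> x \<in> C \<Longrightarrow> x \<in> D \<Longrightarrow> C = D"
  using partition unfolding cluster_partition_def by blast

lemma clusters_disjoint: "C \<in> P \<Longrightarrow> D \<in> P \<Longrightarrow> C \<noteq> D \<Longrightarrow> C \<inter> D = {}"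
  using partition unfolding cluster_partition_def by blast

lemma clusterE:
  assumes "v \<in> V"
  obtains C where "C \<in> P" "v \<in> C"
  using assms Union_P by blast

lemma reach_in_cluster:
  assumes "C \<in> P" "x \<in> C" "y \<in> C" "\<not> e \<subseteq> C"
  shows "reach (E - {e}) V x y"
proof (rule reach_mono)
  show "reach E C x y"
    using connected_cluster[OF assms(1)] assms(2,3) unfolding connected_in_def by blast
qed (use assms(4) cluster_subset_V[OF assms(1)] in auto)

text \<open>The edges of the forest obtained from \<open>\<Union>S\<close> by contracting every cluster.\<close>

definition crossing :: "'a set set \<Rightarrow> 'a set set" where
  "crossing S = {e \<in> E. e \<subseteq> \<Union>S \<and> (\<forall>C\<in>P. \<not> e \<subseteq> C)}"

lemma finite_crossing: "finite (crossing S)"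
  unfolding crossing_def using finite_E by simp

definition side :: "'a set \<Rightarrow> 'a \<Rightarrow> 'a set set \<Rightarrow> 'a set set" where
  "side e a S = {D \<in> S. \<exists>y\<in>D. reach (E - {e}) V a y}"

lemma crossing_split:
  assumes "S \<subseteq> P" "\<forall>C\<in>P. \<not> e \<subseteq> C"
  shows "crossing S - {e} \<subseteq> crossing (side e a S) \<union> crossing (S - side e a S)"
proof
  have closed: "D' \<in> side e a S"
    if "{p, q} \<in> E - {e}" "D \<in> side e a S" "p \<in> D" "q \<in> D'" "D' \<in> S" for p q D D'
  proof -
    obtain y where "y \<in> D" and ay: "reach (E - {e}) V a y" and "D \<in> P"
      using \<open>D \<in> side e a S\<close> assms(1) unfolding side_def by blast
    then have "reach (E - {e}) V y p"
      using reach_in_cluster[OF \<open>D \<in> P\<close> \<open>y \<in> D\<close> \<open>p \<in> D\<close>] assms(2) by blast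
    with ay have "reach (E - {e}) V a p"
      by (rule reach_trans)
    moreover have "reach (E - {e}) V p q"
      using reach_edge[OF that(1)] edge_subset_V that(1) by blast
    ultimately have "reach (E - {e}) V a q"
      by (rule reach_trans)
    then show ?thesis
      using that(4,5) unfolding side_def by blast
  qed
  fix f
  assume f: "f \<in> crossing S - {e}"
  then have "f \<in> E" "f \<noteq> e" "f \<subseteq> \<Union>S"
    unfolding crossing_def by auto
  obtain p q where "f = {p, q}"
    using edgeE[OF \<open>f \<in> E\<close>] by blast
  then have pq: "f = {p, q}" "{p, q} \<in> E - {e}" "{q, p} \<in> E - {e}"
    using \<open>f \<in> E\<close> \<open>f \<noteq> e\<close> by (auto simp: insert_commute)
  obtain D D' where D: "D \<in> S" "p \<in> D" and D': "D' \<in> S" "q \<in> D'"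
    using \<open>f \<subseteq> \<Union>S\<close> pq(1) by blast
  have "D \<in> side e a S \<longleftrightarrow> D' \<in> side e a S"
    using closed[OF pq(2) _ D(2) D'(2) D'(1)] closed[OF pq(3) _ D'(2) D(2) D(1)] by blast
  then have "f \<subseteq> \<Union>(side e a S) \<or> f \<subseteq> \<Union>(S - side e a S)"
    using D D' pq(1) by blast
  then show "f \<in> crossing (side e a S) \<union> crossing (S - side e a S)"
    using f unfolding crossing_def by blast
qed

lemma side_separates:
  assumes "S \<subseteq> P" "{a, b} \<in> E" "\<forall>C\<in>P. \<not> {a, b} \<subseteq> C"
    and "Ca \<in> S" "a \<in> Ca" "Cb \<in> S" "b \<in> Cb"
  shows "Ca \<in> side {a, b} a S" "Cb \<notin> side {a, b} a S"
proof -
  show "Ca \<in> side {a, b} a S"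
    unfolding side_def using assms(4,5) reach_refl[of "E - {{a, b}}" V a] by blast
  show "Cb \<notin> side {a, b} a S"
  proof
    assume "Cb \<in> side {a, b} a S"
    then obtain y where "y \<in> Cb" and ay: "reach (E - {{a, b}}) V a y"
      unfolding side_def by blast
    have "Cb \<in> P"
      using assms(1,6) by blast
    then have "\<not> {a, b} \<subseteq> Cb"
      using assms(3) by blast
    then have "reach (E - {{a, b}}) V y b"
      by (rule reach_in_cluster[OF \<open>Cb \<in> P\<close> \<open>y \<in> Cb\<close> assms(7)])
    with ay have "reach (E - {{a, b}}) V a b"
      by (rule reach_trans)
    then show False
      using edge_is_bridge[OF assms(2)] by simp
  qed
qed

lemma card_crossing_le_split:
  assumes "S \<subseteq> P" "e \<in> crossing S"
  shows "card (crossing S) \<le> card (crossing (side e a S)) + card (crossing (S - side e a S)) + 1"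
proof -
  have "\<forall>C\<in>P. \<not> e \<subseteq> C"
    using assms(2) unfolding crossing_def by blast
  then have "card (crossing S - {e}) \<le> card (crossing (side e a S) \<union> crossing (S - side e a S))"
    using crossing_split[OF assms(1)] by (intro card_mono) (simp_all add: finite_crossing)
  also have "\<dots> \<le> card (crossing (side e a S)) + card (crossing (S - side e a S))"
    by (rule card_Un_le)
  finally show ?thesis
    using card.remove[OF finite_crossing assms(2)] by simp
qed

text \<open>Removing a crossing edge \<open>{a, b}\<close> splits the clusters of \<open>S\<close> into
  those reachable from \<open>a\<close> and the rest; induct on both sides.\<close>

lemma card_crossing_less:
  "S \<subseteq> P \<Longrightarrow> S \<noteq> {} \<Longrightarrow> card (crossing S) < card S"
proof (induction "card S" arbitrary: S rule: less_induct)
  case less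
  have "finite S"
    using less.prems(1) finite_P finite_subset by blast
  show ?case
  proof (cases "crossing S = {}")
    case True
    then show ?thesis
      using \<open>finite S\<close> less.prems(2) by (simp add: card_gt_0_iff)
  next
    case False
    then obtain e where e: "e \<in> crossing S"
      by blast
    then have "e \<in> E" and e_cross: "\<forall>C\<in>P. \<not> e \<subseteq> C" and "e \<subseteq> \<Union>S"
      unfolding crossing_def by auto
    obtain a b where ab: "e = {a, b}"
      using edgeE[OF \<open>e \<in> E\<close>] by blast
    obtain Ca Cb where Ca: "Ca \<in> S" "a \<in> Ca" and Cb: "Cb \<in> S" "b \<in> Cb"
      using \<open>e \<subseteq> \<Union>S\<close> ab by blast
    define S1 where "S1 = side e a S"
    have "Ca \<in> S1" "Cb \<notin> S1"
      using side_separates[OF less.prems(1) _ _ Ca Cb] \<open>e \<in> E\<close> e_cross unfolding S1_def ab by blast+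
    moreover have "S1 \<subseteq> S"
      unfolding S1_def side_def by blast
    ultimately have "S1 \<subset> S" "S - S1 \<subset> S" "S1 \<noteq> {}" "S - S1 \<noteq> {}"
      using Ca(1) Cb(1) by blast+
    then have "card (crossing S1) < card S1" "card (crossing (S - S1)) < card (S - S1)"
      using less.hyps psubset_card_mono[OF \<open>finite S\<close>] less.prems(1) by (meson order_trans psubset_imp_subset)+
    moreover have "card S = card S1 + card (S - S1)"
      using card_Diff_subset[OF finite_subset] card_mono \<open>S1 \<subseteq> S\<close> \<open>finite S\<close>
      by (metis le_add_diff_inverse)
    ultimately show ?thesis
      using card_crossing_le_split[OF less.prems(1) e, of a] unfolding S1_def by linarith
  qed
qed

lemma reach_within_adj_closed:
  assumes "S \<subseteq> P" and closed: "\<forall>C\<in>S. \<forall>D\<in>P. adj E C D \<longrightarrow> D \<in> S"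
    and "C0 \<in> S" "u \<in> C0" "reach E V u z"
  shows "z \<in> \<Union>S"
  using assms(5) unfolding reach_def
proof (induction rule: rtrancl_induct)
  case base
  then show ?case
    using assms(3,4) by blast
next
  case (step x z)
  from step.IH obtain C where C: "C \<in> S" "x \<in> C"
    by blast
  from step.hyps(2) have xz: "{x, z} \<in> E" "z \<in> V"
    by simp_all
  obtain D where D: "D \<in> P" "z \<in> D"
    using clusterE[OF \<open>z \<in> V\<close>] by blast
  have "D \<in> S"
  proof (cases "D = C")
    case False
    then have "adj E C D"
      using adjI[OF xz(1) _ C(2) _ D(2)] by simp
    then show ?thesis
      using closed C(1) D(1) by blast
  qed (use C in simp)
  then show ?case
    using D(2) by blast
qed

lemma adj_closed_eq_P:
  assumes "S \<subseteq> P" "S \<noteq> {}" and closed: "\<And>C D. C \<in> S \<Longrightarrow> D \<in> P \<Longrightarrow> adj E C D \<Longrightarrow> D \<in> S"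
  shows "S = P"
proof -
  have closed': "\<forall>C\<in>S. \<forall>D\<in>P. adj E C D \<longrightarrow> D \<in> S"
    using closed by blast
  obtain C0 where "C0 \<in> S"
    using assms(2) by blast
  then obtain u where "u \<in> C0" "u \<in> V"
    using assms(1) cluster_nonempty cluster_subset_V by blast
  have "P \<subseteq> S"
  proof
    fix D
    assume "D \<in> P"
    then obtain y where "y \<in> D" "y \<in> V"
      using cluster_nonempty cluster_subset_V by blast
    then have "y \<in> \<Union>S"
      using reach_within_adj_closed[OF assms(1) closed' \<open>C0 \<in> S\<close> \<open>u \<in> C0\<close>] reach_V \<open>u \<in> V\<close> by blast
    then obtain C where "C \<in> S" "y \<in> C"
      by blast
    then have "C = D"
      using cluster_eqI[OF _ \<open>D \<in> P\<close> \<open>y \<in> C\<close> \<open>y \<in> D\<close>] assms(1) by blast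
    then show "D \<in> S"
      using \<open>C \<in> S\<close> by simp
  qed
  then show ?thesis
    using assms(1) by blast
qed

definition boundary :: "'a set \<Rightarrow> 'a set set" where
  "boundary C = {e \<in> E. card (e \<inter> C) = 1}"

lemma cdeg_eq_card_boundary: "cdeg E C = card (boundary C)"
  unfolding cdeg_def boundary_def ..

lemma finite_boundary: "finite (boundary C)"
  unfolding boundary_def using finite_E by simp

lemma mem_boundary_iff: "e \<in> boundary C \<longleftrightarrow> e \<in> E \<and> e \<inter> C \<noteq> {} \<and> \<not> e \<subseteq> C"
proof (cases "e \<in> E")
  case True
  then obtain a b where "a \<noteq> b" "e = {a, b}"
    by (rule edgeE)
  then show ?thesis
    unfolding boundary_def by (cases "a \<in> C"; cases "b \<in> C") (auto simp: Int_insert_left)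
qed (simp add: boundary_def)

lemma boundary_not_in_cluster:
  assumes "e \<in> boundary C" "C \<in> P" "D \<in> P"
  shows "\<not> e \<subseteq> D"
  using assms cluster_eqI unfolding mem_boundary_iff by blast

lemma adj_boundaryE:
  assumes "C \<in> P" "D \<in> P" "adj E C D"
  obtains e where "e \<in> boundary C" "e \<inter> D \<noteq> {}"
proof -
  obtain e where e: "e \<in> E" "e \<inter> C \<noteq> {}" "e \<inter> D \<noteq> {}" "C \<noteq> D"
    using assms(3) unfolding adj_def by blast
  then have "\<not> e \<subseteq> C"
    using clusters_disjoint[OF assms(1,2)] by blast
  then show ?thesis
    using that e unfolding mem_boundary_iff by blast
qed

lemma boundary_other_end_unique:
  assumes "e \<in> boundary C" "C \<in> P" "D \<in> P" "D' \<in> P" "D \<noteq> C" "D' \<noteq> C"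
    and "e \<inter> D \<noteq> {}" "e \<inter> D' \<noteq> {}"
  shows "D = D'"
proof -
  have "e \<in> E" "e \<inter> C \<noteq> {}" "\<not> e \<subseteq> C"
    using assms(1) unfolding mem_boundary_iff by simp_all
  obtain a b where "a \<noteq> b" "e = {a, b}"
    using edgeE[OF \<open>e \<in> E\<close>] by blast
  then obtain c where c: "e - C = {c}"
    using \<open>e \<inter> C \<noteq> {}\<close> \<open>\<not> e \<subseteq> C\<close> by (cases "a \<in> C"; cases "b \<in> C") auto
  have "c \<in> X" if X: "X \<in> P" "X \<noteq> C" "e \<inter> X \<noteq> {}" for X
  proof -
    obtain d where "d \<in> e" "d \<in> X"
      using X(3) by blast
    moreover have "d \<notin> C"
      using clusters_disjoint[OF X(1) assms(2) X(2)] \<open>d \<in> X\<close> by blast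
    ultimately show ?thesis
      using c by (metis Diff_iff singletonD)
  qed
  then have "c \<in> D" "c \<in> D'"
    using assms(3-8) by blast+
  then show ?thesis
    by (rule cluster_eqI[OF assms(3,4)])
qed

definition nbrs :: "'a set \<Rightarrow> 'a set set" where
  "nbrs C = {D \<in> P. adj E C D}"

lemma finite_nbrs: "finite (nbrs C)"
  unfolding nbrs_def using finite_P by simp

lemma card_nbrs_le_cdeg:
  assumes "C \<in> P"
  shows "card (nbrs C) \<le> cdeg E C"
proof -
  define other where "other e = (SOME D. D \<in> P \<and> D \<noteq> C \<and> e \<inter> D \<noteq> {})" for e
  have "nbrs C \<subseteq> other ` boundary C"
  proof
    fix D
    assume "D \<in> nbrs C"
    then have D: "D \<in> P" "adj E C D" "D \<noteq> C"
      unfolding nbrs_def adj_def by auto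
    obtain e where e: "e \<in> boundary C" "e \<inter> D \<noteq> {}"
      using adj_boundaryE[OF assms D(1,2)] by blast
    have "other e \<in> P \<and> other e \<noteq> C \<and> e \<inter> other e \<noteq> {}"
      unfolding other_def by (rule someI[of _ D]) (use D e in blast)
    then have "other e = D"
      using boundary_other_end_unique[OF e(1) assms _ D(1) _ D(3)] e(2) by blast
    then show "D \<in> other ` boundary C"
      using e(1) by blast
  qed
  then have "card (nbrs C) \<le> card (other ` boundary C)"
    by (simp add: card_mono finite_boundary)
  also have "\<dots> \<le> cdeg E C"
    unfolding cdeg_eq_card_boundary by (rule card_image_le[OF finite_boundary])
  finally show ?thesis .
qed

lemma adj_imp_cdeg_pos:
  assumes "C \<in> P" "D \<in> P" "adj E C D"
  shows "1 \<le> cdeg E C"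
proof -
  obtain e where "e \<in> boundary C"
    using adj_boundaryE[OF assms] by blast
  then have "0 < card (boundary C)"
    using finite_boundary card_gt_0_iff by blast
  then show ?thesis
    unfolding cdeg_eq_card_boundary by simp
qed

lemma nbrE:
  assumes "C \<in> P" "1 \<le> cdeg E C"
  obtains D where "D \<in> P" "adj E C D"
proof -
  have "boundary C \<noteq> {}"
    using assms(2) unfolding cdeg_eq_card_boundary by auto
  then obtain e where "e \<in> boundary C"
    by blast
  then obtain a b where "e \<in> E" "a \<in> e" "a \<in> C" "b \<in> e" "b \<notin> C"
    unfolding mem_boundary_iff by blast
  moreover obtain D where "D \<in> P" "b \<in> D"
    using clusterE[of b] edge_subset_V \<open>e \<in> E\<close> \<open>b \<in> e\<close> by blast
  ultimately have "adj E C D"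
    by (intro adjI[of e E a C b D]) auto
  then show ?thesis
    using that \<open>D \<in> P\<close> by blast
qed

lemma cdeg_pos:
  assumes "2 \<le> card P" "C \<in> P"
  shows "1 \<le> cdeg E C"
proof (rule ccontr)
  assume "\<not> 1 \<le> cdeg E C"
  then have "D \<in> {C}" if "C' \<in> {C}" "D \<in> P" "adj E C' D" for C' D
    using adj_imp_cdeg_pos that assms(2) by auto
  then have "{C} = P"
    by (intro adj_closed_eq_P) (use assms(2) in auto)
  then show False
    using assms(1) by auto
qed

lemma boundary_eq_crossing:
  assumes "C \<in> P"
  shows "boundary C = {e \<in> crossing P. card (e \<inter> C) = 1}"
proof -
  have "e \<in> crossing P" if "e \<in> boundary C" for e
  proof -
    have "e \<in> E"
      using that unfolding mem_boundary_iff by simp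
    then show ?thesis
      unfolding crossing_def using boundary_not_in_cluster[OF that assms] edge_subset_V Union_P
      by blast
  qed
  then show ?thesis
    by (auto simp: crossing_def boundary_def)
qed

lemma card_crossing_edge_ends:
  assumes "e \<in> crossing P"
  shows "card {C \<in> P. card (e \<inter> C) = 1} = 2"
proof -
  have "e \<in> E" and e_cross: "\<forall>C\<in>P. \<not> e \<subseteq> C"
    using assms unfolding crossing_def by auto
  obtain a b where ab: "e = {a, b}" "a \<in> V" "b \<in> V"
    using edgeE[OF \<open>e \<in> E\<close>] by blast
  obtain Ca where Ca: "Ca \<in> P" "a \<in> Ca"
    using clusterE[OF ab(2)] by blast
  obtain Cb where Cb: "Cb \<in> P" "b \<in> Cb"
    using clusterE[OF ab(3)] by blast
  have ends: "card (e \<inter> C) = 1 \<longleftrightarrow> a \<in> C \<or> b \<in> C" if "C \<in> P" for C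
    using mem_boundary_iff[of e C] e_cross that \<open>e \<in> E\<close> ab(1) by (auto simp: boundary_def)
  have "{C \<in> P. card (e \<inter> C) = 1} = {Ca, Cb}"
    using ends Ca Cb cluster_eqI by blast
  moreover have "Ca \<noteq> Cb"
    using e_cross Ca Cb ab(1) by auto
  ultimately show ?thesis
    by simp
qed

lemma sum_cdeg_eq: "(\<Sum>C\<in>P. cdeg E C) = 2 * card (crossing P)"
proof -
  have "(\<Sum>C\<in>P. cdeg E C) = (\<Sum>C\<in>P. card {e \<in> crossing P. card (e \<inter> C) = 1})"
    unfolding cdeg_eq_card_boundary using boundary_eq_crossing by simp
  also have "\<dots> = 2 * card (crossing P)"
    using sum_multicount[OF finite_P finite_crossing] card_crossing_edge_ends by simp
  finally show ?thesis .
qed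

definition high :: "'a set set" where
  "high = {C \<in> P. 3 \<le> cdeg E C}"

definition leaves :: "'a set set" where
  "leaves = {C \<in> P. cdeg E C = 1}"

lemma card_high_add_2_le_card_leaves:
  assumes "2 \<le> card P"
  shows "card high + 2 \<le> card leaves"
proof -
  have "P \<inter> {C. 3 \<le> cdeg E C} = high" "P \<inter> {C. cdeg E C = 1} = leaves"
    unfolding high_def leaves_def by auto
  then have "2 * card P + card high = (\<Sum>C\<in>P. 2 + of_bool (3 \<le> cdeg E C))"
    and "(\<Sum>C\<in>P. cdeg E C + of_bool (cdeg E C = 1)) = (\<Sum>C\<in>P. cdeg E C) + card leaves"
    using finite_P unfolding sum.distrib by simp_all
  moreover have "(\<Sum>C\<in>P. 2 + of_bool (3 \<le> cdeg E C)) \<le> (\<Sum>C\<in>P. cdeg E C + of_bool (cdeg E C = 1) :: nat)"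
    using cdeg_pos[OF assms] by (intro sum_mono) fastforce
  ultimately have "2 * card P + card high \<le> (\<Sum>C\<in>P. cdeg E C) + card leaves"
    by simp
  moreover have "card (crossing P) < card P"
    using card_crossing_less[of P] assms by fastforce
  ultimately show ?thesis
    unfolding sum_cdeg_eq by linarith
qed


lemma leaf_nbr_unique:
  assumes "C \<in> leaves" "D \<in> nbrs C" "D' \<in> nbrs C"
  shows "D = D'"
proof -
  have "card (nbrs C) \<le> 1"
    using card_nbrs_le_cdeg assms(1) unfolding leaves_def by fastforce
  then show ?thesis
    using assms(2,3) finite_nbrs card_le_Suc0_iff_eq by (metis One_nat_def)
qed

lemma boundary_subset_nbrs:
  assumes "e \<in> boundary C" "C \<in> P"
  shows "e \<subseteq> C \<union> \<Union>(nbrs C)"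
proof
  fix x
  assume "x \<in> e"
  obtain a where "e \<in> E" "a \<in> e" "a \<in> C"
    using assms(1) unfolding mem_boundary_iff by blast
  obtain X where "X \<in> P" "x \<in> X"
    using clusterE edge_subset_V \<open>e \<in> E\<close> \<open>x \<in> e\<close> by blast
  show "x \<in> C \<union> \<Union>(nbrs C)"
  proof (cases "X = C")
    case False
    then have "X \<in> nbrs C"
      unfolding nbrs_def using adjI[OF \<open>e \<in> E\<close> \<open>a \<in> e\<close> \<open>a \<in> C\<close> \<open>x \<in> e\<close> \<open>x \<in> X\<close>] \<open>X \<in> P\<close> by auto
    then show ?thesis
      using \<open>x \<in> X\<close> by blast
  qed (use \<open>x \<in> X\<close> in simp)
qed

end

section \<open>The groups of one merging round\<close>

locale ufo_round = tree_partition +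
  fixes G :: "'a set set set"
  assumes two_le_card_P: "2 \<le> card P"
    and Union_G: "\<Union>G = P"
    and group_nonempty: "g \<in> G \<Longrightarrow> g \<noteq> {}"
    and groups_disjoint: "g \<in> G \<Longrightarrow> g' \<in> G \<Longrightarrow> g \<noteq> g' \<Longrightarrow> g \<inter> g' = {}"
    and valid_groups: "g \<in> G \<Longrightarrow> valid_group E P g"
    and high_absorbs_leaves: "H \<in> P \<Longrightarrow> 3 \<le> cdeg E H \<Longrightarrow> C \<in> P \<Longrightarrow> adj E H C \<Longrightarrow> cdeg E C = 1
      \<Longrightarrow> \<exists>g\<in>G. H \<in> g \<and> C \<in> g"
    and maximal_matching: "{C} \<in> G \<Longrightarrow> {D} \<in> G \<Longrightarrow> adj E C D \<Longrightarrow> cdeg E C \<in> {1, 2}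
      \<Longrightarrow> cdeg E D \<in> {1, 2} \<Longrightarrow> False"
begin

lemma group_subset_P: "g \<in> G \<Longrightarrow> g \<subseteq> P"
  using Union_G by blast

lemma finite_G: "finite G"
  using finite_subset[of G "Pow P"] Union_G finite_P by auto

lemma finite_group: "g \<in> G \<Longrightarrow> finite g"
  using group_subset_P finite_P finite_subset by blast

lemma groupE:
  assumes "C \<in> P"
  obtains g where "g \<in> G" "C \<in> g"
  using assms Union_G by blast

lemma group_unique: "g \<in> G \<Longrightarrow> g' \<in> G \<Longrightarrow> C \<in> g \<Longrightarrow> C \<in> g' \<Longrightarrow> g = g'"
  using groups_disjoint by blast

definition unmerged :: "'a set set" where
  "unmerged = {C \<in> P. {C} \<in> G}"

definition pairs :: "'a set set set" where
  "pairs = {g \<in> G. \<exists>C D. g = {C, D} \<and> adj E C D \<and> cdeg E C \<in> {1, 2} \<and> cdeg E D \<in> {1, 2}}"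

definition stars :: "'a set set set" where
  "stars = G - (\<lambda>C. {C}) ` unmerged - pairs"

lemma finite_pairs: "finite pairs"
  using finite_G finite_subset unfolding pairs_def by fastforce

lemma finite_stars: "finite stars"
  using finite_G finite_subset unfolding stars_def by fastforce

lemma group_of_unmerged: "C \<in> unmerged \<Longrightarrow> g \<in> G \<Longrightarrow> C \<in> g \<Longrightarrow> g = {C}"
  unfolding unmerged_def using group_unique by blast

lemma pair_memberD:
  assumes "{y, z} \<in> pairs"
  shows "y \<in> P" "z \<in> P" "adj E y z" "cdeg E y \<in> {1, 2}" "z \<notin> unmerged"
proof -
  obtain C D where "{y, z} \<in> G"
    and CD: "{y, z} = {C, D}" "adj E C D" "cdeg E C \<in> {1, 2}" "cdeg E D \<in> {1, 2}"
    using assms unfolding pairs_def by (elim CollectE conjE exE) (rule that; assumption)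
  show "y \<in> P" "z \<in> P"
    using group_subset_P[OF \<open>{y, z} \<in> G\<close>] by simp_all
  have yz: "(y = C \<and> z = D) \<or> (y = D \<and> z = C)" and "C \<noteq> D"
    using CD(1,2) unfolding adj_def by (simp_all add: doubleton_eq_iff)
  then show "adj E y z" "cdeg E y \<in> {1, 2}"
    using CD(2-4) adj_commute[of E C D] by auto
  show "z \<notin> unmerged"
  proof
    assume "z \<in> unmerged"
    then have "{y, z} = {z}"
      using group_of_unmerged[OF _ \<open>{y, z} \<in> G\<close>] by simp
    then show False
      using yz \<open>C \<noteq> D\<close> by auto
  qed
qed

lemma pairE:
  assumes "g \<in> pairs"
  obtains y z where "g = {y, z}" "y \<noteq> z"
proof -
  obtain y z where "g = {y, z}" "adj E y z"
    using assms unfolding pairs_def by (elim CollectE conjE exE) (rule that; assumption)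
  then show ?thesis
    using that unfolding adj_def by simp
qed

lemma card_pair: "g \<in> pairs \<Longrightarrow> card g = 2"
  by (erule pairE) simp

lemma group_cases:
  assumes "g \<in> G"
  obtains (single) C where "g = {C}" "C \<in> unmerged"
    | (pair) "g \<in> pairs"
    | (star) H L where "g = insert H L" "H \<notin> L" "H \<in> high" "L \<noteq> {}" "L \<subseteq> leaves"
        "\<And>C. C \<in> L \<Longrightarrow> adj E H C"
proof -
  have "g \<subseteq> P"
    using group_subset_P[OF assms] .
  from valid_groups[OF assms]
  have "(\<exists>C. g = {C}) \<or>
      (\<exists>C D. g = {C, D} \<and> adj E C D \<and> cdeg E C \<in> {1, 2} \<and> cdeg E D \<in> {1, 2}) \<or>
      (\<exists>H L. g = insert H L \<and> H \<notin> L \<and> 3 \<le> cdeg E H \<and> L \<noteq> {} \<and>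
         (\<forall>C\<in>L. cdeg E C = 1 \<and> adj E H C))"
    unfolding valid_group_def by (rule conjunct2)
  then show ?thesis
  proof (elim disjE exE conjE)
    fix C
    assume "g = {C}"
    then show ?thesis
      using single assms \<open>g \<subseteq> P\<close> unfolding unmerged_def by simp
  next
    fix C D
    assume "g = {C, D}" "adj E C D" "cdeg E C \<in> {1, 2}" "cdeg E D \<in> {1, 2}"
    then have "g \<in> pairs"
      using assms unfolding pairs_def by blast
    then show ?thesis
      by (rule pair)
  next
    fix H L
    assume HL: "g = insert H L" "H \<notin> L" "3 \<le> cdeg E H" "L \<noteq> {}" "\<forall>C\<in>L. cdeg E C = 1 \<and> adj E H C"
    then have "H \<in> high" "L \<subseteq> leaves"
      using \<open>g \<subseteq> P\<close> unfolding high_def leaves_def by auto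
    then show ?thesis
      using star HL by simp
  qed
qed

lemma starE:
  assumes "g \<in> stars"
  obtains H L where "g = insert H L" "H \<notin> L" "H \<in> high" "L \<noteq> {}" "L \<subseteq> leaves"
proof -
  have "g \<in> G" "g \<notin> pairs" "\<And>C. C \<in> unmerged \<Longrightarrow> g \<noteq> {C}"
    using assms unfolding stars_def by blast+
  then show ?thesis
    using that by (cases rule: group_cases) blast+
qed

lemma sum_groups_split:
  "sum f G = sum f ((\<lambda>C. {C}) ` unmerged) + sum f pairs + sum f stars"
proof -
  have "(\<lambda>C. {C}) ` unmerged \<subseteq> G" "pairs \<subseteq> G"
    unfolding unmerged_def pairs_def by blast+
  then have "finite ((\<lambda>C. {C}) ` unmerged)"
    using finite_G finite_subset by blast
  have "(\<lambda>C. {C}) ` unmerged \<inter> pairs = {}"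
    using card_pair by fastforce
  have "stars = G - ((\<lambda>C. {C}) ` unmerged \<union> pairs)"
    unfolding stars_def by blast
  then have "sum f G = sum f stars + sum f ((\<lambda>C. {C}) ` unmerged \<union> pairs)"
    using sum.subset_diff[of "(\<lambda>C. {C}) ` unmerged \<union> pairs" G f] finite_G
      \<open>(\<lambda>C. {C}) ` unmerged \<subseteq> G\<close> \<open>pairs \<subseteq> G\<close> by simp
  also have "sum f ((\<lambda>C. {C}) ` unmerged \<union> pairs) = sum f ((\<lambda>C. {C}) ` unmerged) + sum f pairs"
    by (rule sum.union_disjoint) (fact | rule finite_pairs)+
  finally show ?thesis
    by (simp add: ac_simps)
qed

lemma card_G_eq: "card G = card unmerged + card pairs + card stars"
proof -
  have "card ((\<lambda>C. {C}) ` unmerged) = card unmerged"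
    by (rule card_image) (simp add: inj_on_def)
  then show ?thesis
    using sum_groups_split[of "\<lambda>_. 1 :: nat"] by simp
qed

lemma card_P_eq: "card P = card unmerged + 2 * card pairs + (\<Sum>g\<in>stars. card g)"
proof -
  have "card P = (\<Sum>g\<in>G. card g)"
    using card_Union_disjoint[of G] Union_G groups_disjoint finite_group
    unfolding pairwise_def disjnt_def by metis
  also have "\<dots> = card unmerged + 2 * card pairs + (\<Sum>g\<in>stars. card g)"
    unfolding sum_groups_split using card_pair by (simp add: sum.reindex)
  finally show ?thesis .
qed

lemma card_merged: "card ((\<lambda>g. \<Union>g) ` G) = card G"
proof (intro card_image inj_onI)
  fix g g'
  assume "g \<in> G" "g' \<in> G" "\<Union>g = \<Union>g'"
  obtain C x where "C \<in> g" "x \<in> C"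
    using group_nonempty[OF \<open>g \<in> G\<close>] group_subset_P[OF \<open>g \<in> G\<close>] cluster_nonempty by blast
  moreover obtain C' where "C' \<in> g'" "x \<in> C'"
    using \<open>\<Union>g = \<Union>g'\<close> calculation by blast
  ultimately have "C = C'"
    using cluster_eqI group_subset_P \<open>g \<in> G\<close> \<open>g' \<in> G\<close> by blast
  then show "g = g'"
    using group_unique \<open>g \<in> G\<close> \<open>g' \<in> G\<close> \<open>C \<in> g\<close> \<open>C' \<in> g'\<close> by blast
qed


definition unmerged_nbrs :: "'a set \<Rightarrow> 'a set set" where
  "unmerged_nbrs y = {C \<in> unmerged. adj E y C}"

definition pair_nbrs :: "'a set set \<Rightarrow> 'a set set" where
  "pair_nbrs g = \<Union>(unmerged_nbrs ` g)"

definition sandwiched :: "'a set set" where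
  "sandwiched = {C \<in> unmerged. cdeg E C = 2 \<and> nbrs C \<subseteq> high}"

lemma unmerged_subset_P: "unmerged \<subseteq> P"
  unfolding unmerged_def by blast

lemma cdeg_not_high:
  assumes "C \<in> P" "C \<notin> high"
  shows "cdeg E C \<in> {1, 2}"
  using cdeg_pos[OF two_le_card_P assms(1)] assms unfolding high_def by auto

lemma nbr_of_unmerged_paired_or_high:
  assumes "C \<in> unmerged" "C \<notin> high" "D \<in> nbrs C"
  shows "D \<in> \<Union>pairs \<or> D \<in> high"
proof -
  have "C \<in> P" "{C} \<in> G" "D \<in> P" "adj E C D"
    using assms(1,3) unfolding unmerged_def nbrs_def by auto
  obtain g where "g \<in> G" "D \<in> g"
    using groupE[OF \<open>D \<in> P\<close>] .
  then show ?thesis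
  proof (cases rule: group_cases)
    case (single D')
    then have "{D} \<in> G"
      using \<open>D \<in> g\<close> \<open>g \<in> G\<close> by simp
    show ?thesis
    proof (rule ccontr)
      assume "\<not> ?thesis"
      then show False
        using maximal_matching[OF \<open>{C} \<in> G\<close> \<open>{D} \<in> G\<close> \<open>adj E C D\<close>]
          cdeg_not_high[OF \<open>C \<in> P\<close> assms(2)] cdeg_not_high[OF \<open>D \<in> P\<close>] by blast
    qed
  next
    case pair
    then show ?thesis
      using \<open>D \<in> g\<close> by blast
  next
    case (star H L)
    show ?thesis
    proof (cases "D = H")
      case False
      then have "D \<in> leaves" "adj E H D"
        using star \<open>D \<in> g\<close> by auto
      moreover have "H \<in> P"
        using star(3) unfolding high_def by simp
      ultimately have "H \<in> nbrs D" "C \<in> nbrs D"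
        using \<open>C \<in> P\<close> \<open>adj E C D\<close> adj_commute unfolding nbrs_def by blast+
      then have "C = H"
        using leaf_nbr_unique[OF \<open>D \<in> leaves\<close>] by blast
      then show ?thesis
        using assms(2) star(3) by simp
    qed (use star in simp)
  qed
qed

lemma unmerged_leaf_nbr_not_high:
  assumes "C \<in> unmerged" "C \<in> leaves" "D \<in> nbrs C"
  shows "D \<notin> high"
proof
  assume "D \<in> high"
  have "C \<in> P" "D \<in> P" "adj E D C" "cdeg E C = 1" "3 \<le> cdeg E D"
    using assms \<open>D \<in> high\<close> adj_commute unfolding nbrs_def leaves_def high_def by auto
  then obtain g where "g \<in> G" "D \<in> g" "C \<in> g"
    using high_absorbs_leaves by blast
  then have "D = C"
    using group_of_unmerged[OF assms(1)] by blast
  then show False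
    using \<open>adj E D C\<close> unfolding adj_def by simp
qed

lemma unmerged_not_high_cases:
  assumes "C \<in> unmerged" "C \<notin> high"
  shows "C \<in> \<Union>(pair_nbrs ` pairs) \<or> C \<in> sandwiched"
proof (rule ccontr)
  assume no: "\<not> ?thesis"
  have "C \<in> P"
    using assms(1) unmerged_subset_P by blast
  have "D \<in> high" if "D \<in> nbrs C" for D
  proof -
    have "D \<notin> \<Union>pairs"
    proof
      assume "D \<in> \<Union>pairs"
      then obtain g where "g \<in> pairs" "D \<in> g"
        by blast
      moreover have "C \<in> unmerged_nbrs D"
        using assms(1) that adj_commute unfolding nbrs_def unmerged_nbrs_def by blast
      ultimately show False
        using no unfolding pair_nbrs_def by blast
    qed
    then show ?thesis
      using nbr_of_unmerged_paired_or_high[OF assms that] by blast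
  qed
  then have "nbrs C \<subseteq> high"
    by blast
  then have "cdeg E C = 1"
    using cdeg_not_high[OF \<open>C \<in> P\<close> assms(2)] no assms(1) unfolding sandwiched_def by auto
  then obtain D where "D \<in> P" "adj E C D"
    using nbrE[OF \<open>C \<in> P\<close>] by auto
  then have "D \<in> nbrs C"
    unfolding nbrs_def by simp
  moreover have "C \<in> leaves"
    using \<open>C \<in> P\<close> \<open>cdeg E C = 1\<close> unfolding leaves_def by simp
  ultimately show False
    using unmerged_leaf_nbr_not_high[OF assms(1)] \<open>nbrs C \<subseteq> high\<close> by blast
qed

lemma card_unmerged_le:
  "card unmerged \<le> (\<Sum>g\<in>pairs. card (pair_nbrs g)) + card sandwiched + card high"
proof -
  have "unmerged \<subseteq> \<Union>(pair_nbrs ` pairs) \<union> sandwiched \<union> high"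
    using unmerged_not_high_cases by blast
  moreover have "\<Union>(pair_nbrs ` pairs) \<union> sandwiched \<union> high \<subseteq> P"
    using unmerged_subset_P unfolding pair_nbrs_def unmerged_nbrs_def sandwiched_def high_def by blast
  ultimately have "card unmerged \<le> card (\<Union>(pair_nbrs ` pairs) \<union> sandwiched \<union> high)"
    using card_mono finite_P finite_subset by metis
  also have "\<dots> \<le> card (\<Union>(pair_nbrs ` pairs)) + card sandwiched + card high"
    by (meson add_le_mono card_Un_le le_refl order_trans)
  also have "card (\<Union>(pair_nbrs ` pairs)) \<le> (\<Sum>g\<in>pairs. card (pair_nbrs g))"
    using card_UN_le[OF finite_pairs] .
  finally show ?thesis
    by simp
qed

lemma sandwiched_subset_P: "sandwiched \<subseteq> P"
  using unmerged_subset_P unfolding sandwiched_def by blast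

lemma boundary_sandwiched_subset_crossing:
  assumes "b \<in> sandwiched"
  shows "boundary b \<subseteq> crossing (high \<union> sandwiched)"
proof
  fix e
  assume "e \<in> boundary b"
  have "b \<in> P" "nbrs b \<subseteq> high"
    using assms sandwiched_subset_P unfolding sandwiched_def by auto
  then have "e \<subseteq> \<Union>(high \<union> sandwiched)"
    using boundary_subset_nbrs[OF \<open>e \<in> boundary b\<close>] assms by blast
  moreover have "e \<in> E" "\<forall>D\<in>P. \<not> e \<subseteq> D"
    using \<open>e \<in> boundary b\<close> boundary_not_in_cluster[OF \<open>e \<in> boundary b\<close> \<open>b \<in> P\<close>]
    unfolding mem_boundary_iff by auto
  ultimately show "e \<in> crossing (high \<union> sandwiched)"
    unfolding crossing_def by blast
qed

lemma sandwiched_boundaries_disjoint: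
  assumes "b \<in> sandwiched" "b' \<in> sandwiched" "b \<noteq> b'"
  shows "boundary b \<inter> boundary b' = {}"
proof (rule ccontr)
  assume "boundary b \<inter> boundary b' \<noteq> {}"
  then obtain e where "e \<in> boundary b" "e \<in> boundary b'"
    by blast
  then have "adj E b b'"
    using assms(3) unfolding mem_boundary_iff adj_def by auto
  then have "b' \<in> high"
    using assms(1,2) sandwiched_subset_P unfolding sandwiched_def nbrs_def by blast
  then show False
    using assms(2) unfolding high_def sandwiched_def by simp
qed

text \<open>The two boundary edges of each sandwiched cluster are distinct edges of the
  forest contracted from the high-degree and sandwiched clusters.\<close>

lemma card_sandwiched_less_card_high:
  assumes "high \<union> sandwiched \<noteq> {}"
  shows "card sandwiched < card high"
proof -
  have "high \<subseteq> P"
    unfolding high_def by blast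
  then have fin: "finite high" "finite sandwiched"
    using finite_P sandwiched_subset_P finite_subset by blast+
  have "high \<inter> sandwiched = {}"
    unfolding high_def sandwiched_def by auto
  then have card_S: "card (high \<union> sandwiched) = card high + card sandwiched"
    using card_Un_disjoint[OF fin] by simp
  have "2 * card sandwiched = (\<Sum>b\<in>sandwiched. card (boundary b))"
    using cdeg_eq_card_boundary unfolding sandwiched_def by simp
  also have "\<dots> = card (\<Union>b\<in>sandwiched. boundary b)"
    using card_UN_disjoint[OF fin(2)] finite_boundary sandwiched_boundaries_disjoint by metis
  also have "\<dots> \<le> card (crossing (high \<union> sandwiched))"
    using boundary_sandwiched_subset_crossing by (intro card_mono finite_crossing) blast
  also have "\<dots> < card (high \<union> sandwiched)"
    using card_crossing_less assms \<open>high \<subseteq> P\<close> sandwiched_subset_P by simp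
  finally show ?thesis
    using card_S by linarith
qed

definition near_leaves :: "'a set \<Rightarrow> 'a set set" where
  "near_leaves y = leaves \<inter> insert y (unmerged_nbrs y)"

definition pair_leaves :: "'a set set \<Rightarrow> 'a set set" where
  "pair_leaves g = \<Union>(near_leaves ` g)"

lemma leaves_subset_stars_pair_leaves:
  "leaves \<subseteq> (\<Union>g\<in>stars. leaves \<inter> g) \<union> (\<Union>g\<in>pairs. pair_leaves g)"
proof
  fix C
  assume "C \<in> leaves"
  then have "C \<in> P" "C \<notin> high" "C \<notin> sandwiched"
    unfolding leaves_def high_def sandwiched_def by auto
  obtain g where "g \<in> G" "C \<in> g"
    using groupE[OF \<open>C \<in> P\<close>] .
  have "C \<in> near_leaves C"
    using \<open>C \<in> leaves\<close> unfolding near_leaves_def by blast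
  consider "g \<in> pairs" | "g \<in> (\<lambda>C. {C}) ` unmerged" | "g \<in> stars"
    using \<open>g \<in> G\<close> unfolding stars_def by blast
  then show "C \<in> (\<Union>g\<in>stars. leaves \<inter> g) \<union> (\<Union>g\<in>pairs. pair_leaves g)"
  proof cases
    case 1
    then show ?thesis
      using \<open>C \<in> g\<close> \<open>C \<in> near_leaves C\<close> unfolding pair_leaves_def by blast
  next
    case 2
    then have "C \<in> unmerged"
      using \<open>C \<in> g\<close> by auto
    then obtain g' y where "g' \<in> pairs" "y \<in> g'" "C \<in> unmerged_nbrs y"
      using unmerged_not_high_cases \<open>C \<notin> high\<close> \<open>C \<notin> sandwiched\<close> unfolding pair_nbrs_def by blast
    then have "C \<in> pair_leaves g'"
      using \<open>C \<in> leaves\<close> unfolding pair_leaves_def near_leaves_def by blast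
    then show ?thesis
      using \<open>g' \<in> pairs\<close> by blast
  next
    case 3
    then show ?thesis
      using \<open>C \<in> g\<close> \<open>C \<in> leaves\<close> by blast
  qed
qed

lemma card_leaves_le:
  "card leaves \<le> (\<Sum>g\<in>stars. card (leaves \<inter> g)) + (\<Sum>g\<in>pairs. card (pair_leaves g))"
proof -
  have "(\<Union>g\<in>stars. leaves \<inter> g) \<union> (\<Union>g\<in>pairs. pair_leaves g) \<subseteq> P"
    unfolding pair_leaves_def near_leaves_def leaves_def by blast
  then have "card leaves \<le> card ((\<Union>g\<in>stars. leaves \<inter> g) \<union> (\<Union>g\<in>pairs. pair_leaves g))"
    using leaves_subset_stars_pair_leaves card_mono finite_P finite_subset by metis
  also have "\<dots> \<le> card (\<Union>g\<in>stars. leaves \<inter> g) + card (\<Union>g\<in>pairs. pair_leaves g)"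
    by (rule card_Un_le)
  also have "\<dots> \<le> (\<Sum>g\<in>stars. card (leaves \<inter> g)) + (\<Sum>g\<in>pairs. card (pair_leaves g))"
    using card_UN_le[OF finite_stars] card_UN_le[OF finite_pairs] by (rule add_mono)
  finally show ?thesis .
qed

lemma card_star_leaves_less:
  assumes "g \<in> stars"
  shows "card (leaves \<inter> g) < card g"
proof -
  obtain H L where "g = insert H L" "H \<in> high"
    using starE[OF assms] by metis
  then have "H \<in> g" "H \<notin> leaves"
    unfolding high_def leaves_def by auto
  then have "leaves \<inter> g \<subset> g"
    by blast
  moreover have "finite g"
    using assms finite_group unfolding stars_def by blast
  ultimately show ?thesis
    by (rule psubset_card_mono[rotated])
qed

lemma two_le_card_star:
  assumes "g \<in> stars"
  shows "2 \<le> card g"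
proof -
  obtain H L where "g = insert H L" "H \<notin> L" "L \<noteq> {}"
    using starE[OF assms] by metis
  moreover have "finite g"
    using assms finite_group unfolding stars_def by blast
  ultimately show ?thesis
    by (simp add: Suc_leI card_gt_0_iff)
qed


lemma finite_unmerged_nbrs: "finite (unmerged_nbrs y)"
  by (rule finite_subset[OF _ finite_P]) (auto simp: unmerged_nbrs_def unmerged_def)

lemma card_unmerged_nbrs_le_1:
  assumes "{y, z} \<in> pairs"
  shows "card (unmerged_nbrs y) \<le> 1"
proof -
  note yz = pair_memberD[OF assms]
  have "z \<in> nbrs y"
    unfolding nbrs_def using yz by simp
  then have "card (nbrs y - {z}) \<le> 1"
    using card_nbrs_le_cdeg[OF yz(1)] yz(4) finite_nbrs by (auto simp: card_Diff_singleton)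
  moreover have "unmerged_nbrs y \<subseteq> nbrs y - {z}"
    using yz(5) unmerged_subset_P unfolding unmerged_nbrs_def nbrs_def by blast
  ultimately show ?thesis
    using card_mono[of "nbrs y - {z}" "unmerged_nbrs y"] finite_nbrs by simp
qed

lemma unmerged_nbrs_of_leaf:
  assumes "{y, z} \<in> pairs" "y \<in> leaves"
  shows "unmerged_nbrs y = {}"
proof -
  note yz = pair_memberD[OF assms(1)]
  have "X = z" if "X \<in> unmerged_nbrs y" for X
  proof (rule leaf_nbr_unique[OF assms(2)])
    show "X \<in> nbrs y" "z \<in> nbrs y"
      using that yz unmerged_subset_P unfolding unmerged_nbrs_def nbrs_def by auto
  qed
  then show ?thesis
    using yz(5) unfolding unmerged_nbrs_def by blast
qed

lemma card_near_leaves_le_1: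
  assumes "{y, z} \<in> pairs"
  shows "card (near_leaves y) \<le> 1"
proof (cases "y \<in> leaves")
  case True
  then have "near_leaves y \<subseteq> {y}"
    using unmerged_nbrs_of_leaf[OF assms] unfolding near_leaves_def by blast
  then have "near_leaves y = {} \<or> near_leaves y = {y}"
    by (rule subset_singletonD)
  then show ?thesis
    by auto
next
  case False
  then have "near_leaves y \<subseteq> unmerged_nbrs y"
    unfolding near_leaves_def by blast
  then have "card (near_leaves y) \<le> card (unmerged_nbrs y)"
    by (rule card_mono[OF finite_unmerged_nbrs])
  then show ?thesis
    using card_unmerged_nbrs_le_1[OF assms] by linarith
qed

lemma near_leaves_shape:
  assumes "{y, z} \<in> pairs" "near_leaves y \<noteq> {}"
  shows "unmerged_nbrs y \<subseteq> leaves" "nbrs y \<subseteq> insert z (unmerged_nbrs y)"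
proof -
  note yz = pair_memberD[OF assms(1)]
  have "z \<in> nbrs y"
    unfolding nbrs_def using yz by simp
  have "unmerged_nbrs y \<subseteq> leaves \<and> nbrs y \<subseteq> insert z (unmerged_nbrs y)"
  proof (cases "y \<in> leaves")
    case True
    have "nbrs y \<subseteq> {z}"
      using leaf_nbr_unique[OF True _ \<open>z \<in> nbrs y\<close>] by blast
    then show ?thesis
      using unmerged_nbrs_of_leaf[OF assms(1) True] by simp
  next
    case False
    then obtain l where l: "l \<in> leaves" "l \<in> unmerged_nbrs y"
      using assms(2) unfolding near_leaves_def by blast
    have "\<forall>a\<in>unmerged_nbrs y. \<forall>b\<in>unmerged_nbrs y. a = b"
      using card_le_Suc0_iff_eq[OF finite_unmerged_nbrs] card_unmerged_nbrs_le_1[OF assms(1)] by simp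
    then have "unmerged_nbrs y = {l}"
      using l(2) by blast
    have "l \<in> nbrs y" "z \<noteq> l"
      using l(2) yz(5) unmerged_subset_P unfolding unmerged_nbrs_def nbrs_def by auto
    moreover have "card (nbrs y) \<le> 2"
      using card_nbrs_le_cdeg[OF yz(1)] yz(4) by auto
    ultimately have "nbrs y \<subseteq> {z, l}"
      using subset_doubleton_if_card_le_2[OF finite_nbrs _ \<open>z \<in> nbrs y\<close>] by simp
    then show ?thesis
      using l(1) \<open>unmerged_nbrs y = {l}\<close> by auto
  qed
  then show "unmerged_nbrs y \<subseteq> leaves" "nbrs y \<subseteq> insert z (unmerged_nbrs y)"
    by simp_all
qed

lemma near_leaves_closed:
  assumes "{y, z} \<in> pairs" "near_leaves y \<noteq> {}" "X \<in> insert y (unmerged_nbrs y)"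
  shows "nbrs X \<subseteq> insert z (insert y (unmerged_nbrs y)) \<and> X \<notin> high"
proof (cases "X = y")
  case True
  then show ?thesis
    using near_leaves_shape[OF assms(1,2)] pair_memberD(4)[OF assms(1)] unfolding high_def by auto
next
  case False
  then have "X \<in> unmerged_nbrs y"
    using assms(3) by simp
  then have "X \<in> leaves" "adj E X y"
    using near_leaves_shape(1)[OF assms(1,2)] adj_commute unfolding unmerged_nbrs_def by auto
  then have "y \<in> nbrs X"
    using pair_memberD(1)[OF assms(1)] unfolding nbrs_def by simp
  then have "nbrs X \<subseteq> {y}"
    using leaf_nbr_unique[OF \<open>X \<in> leaves\<close> _ \<open>y \<in> nbrs X\<close>] by blast
  then show ?thesis
    using \<open>X \<in> leaves\<close> unfolding leaves_def high_def by auto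
qed

lemma pair_end_without_near_leaves:
  assumes "high \<noteq> {}" "{y, z} \<in> pairs"
  shows "near_leaves y = {} \<or> near_leaves z = {}"
proof (rule ccontr)
  assume "\<not> ?thesis"
  then have ny: "near_leaves y \<noteq> {}" and nz: "near_leaves z \<noteq> {}"
    by simp_all
  have "{z, y} \<in> pairs"
    using assms(2) by (simp add: insert_commute)
  define S where "S = insert y (unmerged_nbrs y) \<union> insert z (unmerged_nbrs z)"
  have "S \<subseteq> P"
    using pair_memberD[OF assms(2)] unmerged_subset_P unfolding S_def unmerged_nbrs_def by auto
  moreover have "D \<in> S" if "C \<in> S" "D \<in> P" "adj E C D" for C D
  proof -
    have "D \<in> nbrs C"
      unfolding nbrs_def using that(2,3) by simp
    then show ?thesis
      using that(1) near_leaves_closed[OF assms(2) ny] near_leaves_closed[OF \<open>{z, y} \<in> pairs\<close> nz]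
      unfolding S_def by blast
  qed
  ultimately have "S = P"
    by (intro adj_closed_eq_P) (auto simp: S_def)
  moreover have "X \<notin> high" if "X \<in> S" for X
    using that near_leaves_closed[OF assms(2) ny] near_leaves_closed[OF \<open>{z, y} \<in> pairs\<close> nz]
    unfolding S_def by blast
  ultimately show False
    using assms(1) unfolding high_def by blast
qed

lemma card_pair_nbrs_le_2:
  assumes "g \<in> pairs"
  shows "card (pair_nbrs g) \<le> 2"
proof -
  obtain y z where "g = {y, z}"
    using pairE[OF assms] by metis
  then have "{y, z} \<in> pairs" "{z, y} \<in> pairs"
    using assms by (simp_all add: insert_commute)
  have "card (pair_nbrs g) \<le> card (unmerged_nbrs y) + card (unmerged_nbrs z)"
    unfolding pair_nbrs_def \<open>g = {y, z}\<close> by (simp add: card_Un_le)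
  then show ?thesis
    using card_unmerged_nbrs_le_1[OF \<open>{y, z} \<in> pairs\<close>] card_unmerged_nbrs_le_1[OF \<open>{z, y} \<in> pairs\<close>]
    by linarith
qed

lemma card_pair_leaves_le_1:
  assumes "high \<noteq> {}" "g \<in> pairs"
  shows "card (pair_leaves g) \<le> 1"
proof -
  obtain y z where "g = {y, z}"
    using pairE[OF assms(2)] by metis
  then have "{y, z} \<in> pairs" "{z, y} \<in> pairs"
    using assms(2) by (simp_all add: insert_commute)
  have "pair_leaves g = near_leaves y \<union> near_leaves z"
    unfolding pair_leaves_def \<open>g = {y, z}\<close> by simp
  then show ?thesis
    using pair_end_without_near_leaves[OF assms(1) \<open>{y, z} \<in> pairs\<close>]
      card_near_leaves_le_1[OF \<open>{y, z} \<in> pairs\<close>] card_near_leaves_le_1[OF \<open>{z, y} \<in> pairs\<close>]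
    by auto
qed

lemma six_card_G_le_five_card_P: "6 * card G \<le> 5 * card P"
proof -
  have N: "(\<Sum>g\<in>pairs. card (pair_nbrs g)) \<le> 2 * card pairs"
    using sum_mono[of pairs "\<lambda>g. card (pair_nbrs g)" "\<lambda>_. 2"] card_pair_nbrs_le_2 by simp
  have T: "2 * card stars \<le> (\<Sum>g\<in>stars. card g)"
    using sum_mono[of stars "\<lambda>_. 2" card] two_le_card_star by simp
  have "(\<Sum>g\<in>stars. card (leaves \<inter> g) + 1) \<le> (\<Sum>g\<in>stars. card g)"
    using sum_mono[of stars "\<lambda>g. card (leaves \<inter> g) + 1" card] card_star_leaves_less by fastforce
  then have L: "(\<Sum>g\<in>stars. card (leaves \<inter> g)) + card stars \<le> (\<Sum>g\<in>stars. card g)"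
    unfolding sum.distrib by simp
  have "card unmerged + 6 * card stars \<le> 4 * card pairs + 5 * (\<Sum>g\<in>stars. card g)"
  proof (cases "high = {}")
    case True
    then have "sandwiched = {}"
      using card_sandwiched_less_card_high by fastforce
    then show ?thesis
      using card_unmerged_le N T True by simp
  next
    case False
    have "(\<Sum>g\<in>pairs. card (pair_leaves g)) \<le> card pairs"
      using sum_mono[of pairs "\<lambda>g. card (pair_leaves g)" "\<lambda>_. 1"] card_pair_leaves_le_1[OF False] by simp
    then show ?thesis
      using card_unmerged_le card_sandwiched_less_card_high card_high_add_2_le_card_leaves[OF two_le_card_P]
        card_leaves_le N T L False by fastforce
  qed
  then show ?thesis
    using card_G_eq card_P_eq by linarith
qed

end

lemma ufo_step_card_le:
  assumes "is_tree V E" "cluster_partition V E P" "2 \<le> card P" "ufo_step E P Q"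
  shows "6 * card Q \<le> 5 * card P"
proof -
  obtain G where "\<Union>G = P" "\<forall>g\<in>G. g \<noteq> {}"
    "\<forall>g1\<in>G. \<forall>g2\<in>G. g1 \<noteq> g2 \<longrightarrow> g1 \<inter> g2 = {}" "\<forall>g\<in>G. valid_group E P g"
    "\<forall>H\<in>P. cdeg E H \<ge> 3 \<longrightarrow> (\<forall>C\<in>P. adj E H C \<and> cdeg E C = 1 \<longrightarrow> (\<exists>g\<in>G. H \<in> g \<and> C \<in> g))"
    "\<forall>C\<in>P. \<forall>D\<in>P. {C} \<in> G \<and> {D} \<in> G \<and> adj E C D \<and> cdeg E C \<in> {1, 2} \<and> cdeg E D \<in> {1, 2}
       \<longrightarrow> False"
    and Q: "Q = (\<lambda>g. \<Union>g) ` G"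
    using assms(4) unfolding ufo_step_def by (elim exE conjE) (rule that; assumption)
  then interpret ufo_round V E P G
    using assms(1-3) by unfold_locales blast+
  show ?thesis
    unfolding Q card_merged using six_card_G_le_five_card_P .
qed

theorem lemmaB17:
  fixes V :: "'a set" and E :: "'a set set" and Ls :: "'a set set list" and l :: nat
  assumes "ufo_tree V E Ls" and "0 < l" and "l < length Ls"
  shows "real (card (Ls ! l)) \<le> 5 / 6 * real (card (Ls ! (l - 1)))"
proof -
  obtain i where l: "l = Suc i"
    using assms(2) gr0_implies_Suc by blast
  have "is_tree V E" "cluster_partition V E (Ls ! i)"
    and "2 \<le> card (Ls ! i)" "ufo_step E (Ls ! i) (Ls ! Suc i)"
    using assms(1,3) unfolding ufo_tree_def l by auto
  then have "6 * card (Ls ! l) \<le> 5 * card (Ls ! i)"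
    unfolding l by (rule ufo_step_card_le)
  then show ?thesis
    unfolding l by simp
qed

end
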